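(* Let $(X,d)$ be a compact doubling metric space with $\operatorname{diam}(X,d)=1/2$ and $\mathcal S$ a hyperbolic filling with parameters $a\ge\lambda\ge6$. Let $\rho:\mathcal S\to(0,\infty)$ satisfy (H1) and (H4) (exponent $p$). Let $C>1$, let $\mu_k$ be a $(C,\pi)$-balanced probability mass function on $\mathcal S_k$, and let $f_0:\mathcal S_{k+1}\to(0,1]$ be a probability mass function such that $(\mu_k,f_0)$ is $(C,\pi)$-compatible. Let $e=\{w_1,w_1'\}$ be a horizontal edge between vertices of $\mathcal S_{k+1}$ on which $f_0$ is $(C,\pi)$-unbalanced. Then $(\mu_k,B^e_{k+1}(f_0))$ is $(C,\pi)$-compatible.
   Context: Hyperbolic filling: $X_0\subset X_1\subset\cdots$ increasing, $X_n$ maximal $a^{-n}$-separated in $X$ ($X_0=\{x_0\}$); $\mathcal S_n=\{(x,n):x\in X_n\}$, $\mathcal S=\bigcup_n\mathcal S_n$, $v_0=(x_0,0)$. Each $(x,n)$, $n\ge1$, has a fixed parent $(y,n-1)$ with $d(x,y)=\min_{z\in X_{n-1}}d(x,z)$; $\mathcal D_n(v)$ = descendants of $v$ in $\mathcal S_n$; genealogy $g(v)=(v_0,\dots,v_k=v)$. $D_2$: graph distance for the graph with edges vertex–parent and horizontal edges between distinct $(x,n),(y,n)$ with $B(x,\lambda a^{-n})\cap B(y,\lambda a^{-n})\ne\emptyset$. $\pi(v)=\prod_{w\in g(v)}\rho(w)$. (H1) $0<\eta_-\le\rho\le\eta_+<1$. (H4) $\sum_{w\in\mathcal D_n(v)}\pi(w)^p\le\pi(v)^p$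 for all $v\in\mathcal S_m$, $n>m$. $f:\mathcal S_k\to(0,\infty)$ is $(C,\pi)$-balanced if $f(u)/\pi(u)^p\le C^2f(v)/\pi(v)^p$ for all $u,v\in\mathcal S_k$ with $D_2(u,v)=1$; it is $(C,\pi)$-balanced on an edge $\{u,v\}$ if $C^{-2}f(v)/\pi(v)^p\le f(u)/\pi(u)^p\le C^2f(v)/\pi(v)^p$, and $(C,\pi)$-unbalanced on it otherwise. $(f_0,f_1)$ with $f_0$ on $\mathcal S_k$, $f_1$ on $\mathcal S_{k+1}$ is $(C,\pi)$-compatible if $f_0(u)/\pi(u)^p\le f_1(v)/\pi(v)^p\le Cf_0(u)/\pi(u)^p$ whenever $u$ is the parent of $v$. Balancing operator: for a horizontal edge $e=\{u,v\}$ in $\mathcal S_j$ and $f:\mathcal S_j\to(0,\infty)$, $B^e_j(f)=f$ if $f$ is balanced on $e$; if $f(u)/\pi(u)^p>C^2f(v)/\pi(v)^p$, then $B^e_j(f)$ agrees with $f$ off $\{u,v\}$ and equals $f(u)-\alpha$ at $u$, $f(v)+\alpha$ at $v$, where $\alpha(C^2/\pi(v)^p+1/\pi(u)^p)=f(u)/\pi(u)^p-C^2f(v)/\pi(v)^p$; symmetrically with $u,v$ exchanged if $f(v)/\pi(v)^p>C^2f(u)/\pi(u)^p$. *)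

theory Defs
  imports "HOL-Analysis.Analysis"
begin

type_synonym 'a vertex = "'a \<times> nat"

definition doubling :: "'a::metric_space set \<Rightarrow> bool" where
  "doubling X \<longleftrightarrow> (\<exists>N::nat. \<forall>x\<in>X. \<forall>r>0. \<exists>F. F \<subseteq> X \<and> finite F \<and> card F \<le> N \<and>
      X \<inter> ball x (2*r) \<subseteq> (\<Union>y\<in>F. ball y r))"

definition separated :: "real \<Rightarrow> 'a::metric_space set \<Rightarrow> bool" where
  "separated eps Y \<longleftrightarrow> (\<forall>x\<in>Y. \<forall>y\<in>Y. x \<noteq> y \<longrightarrow> dist x y \<ge> eps)"

definition maximal_separated :: "real \<Rightarrow> 'a::metric_space set \<Rightarrow> 'a set \<Rightarrow> bool" where
  "maximal_separated eps Y X \<longleftrightarrow> Y \<subseteq> X \<and> separated eps Y \<and>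
     (\<forall>Z. Y \<subset> Z \<and> Z \<subseteq> X \<longrightarrow> \<not> separated eps Z)"

definition Slev :: "(nat \<Rightarrow> 'a set) \<Rightarrow> nat \<Rightarrow> 'a vertex set" where
  "Slev Xs n = {(x, n) | x. x \<in> Xs n}"

definition Sall :: "(nat \<Rightarrow> 'a set) \<Rightarrow> 'a vertex set" where
  "Sall Xs = (\<Union>n. Slev Xs n)"

definition hyperbolic_filling ::
  "'a::metric_space set \<Rightarrow> real \<Rightarrow> (nat \<Rightarrow> 'a set) \<Rightarrow> 'a \<Rightarrow> ('a vertex \<Rightarrow> 'a vertex) \<Rightarrow> bool" where
  "hyperbolic_filling X a Xs x0 par \<longleftrightarrow>
     Xs 0 = {x0} \<and> (\<forall>n. Xs n \<subseteq> Xs (Suc n)) \<and>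
     (\<forall>n. maximal_separated (1 / a ^ n) (Xs n) X) \<and>
     (\<forall>n. \<forall>x\<in>Xs (Suc n). \<exists>y\<in>Xs n. par (x, Suc n) = (y, n) \<and>
          (\<forall>z\<in>Xs n. dist x y \<le> dist x z))"

definition genealogy :: "('a vertex \<Rightarrow> 'a vertex) \<Rightarrow> 'a vertex \<Rightarrow> 'a vertex set" where
  "genealogy par v = {(par ^^ i) v | i. i \<le> snd v}"

definition piw :: "('a vertex \<Rightarrow> 'a vertex) \<Rightarrow> ('a vertex \<Rightarrow> real) \<Rightarrow> 'a vertex \<Rightarrow> real" where
  "piw par rho v = (\<Prod>w\<in>genealogy par v. rho w)"

definition Desc :: "(nat \<Rightarrow> 'a set) \<Rightarrow> ('a vertex \<Rightarrow> 'a vertex) \<Rightarrow> nat \<Rightarrow> 'a vertex \<Rightarrow> 'a vertex set" where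
  "Desc Xs par n v = {w \<in> Slev Xs n. (par ^^ (n - snd v)) w = v}"

definition H1 :: "(nat \<Rightarrow> 'a set) \<Rightarrow> ('a vertex \<Rightarrow> real) \<Rightarrow> bool" where
  "H1 Xs rho \<longleftrightarrow> (\<exists>em ep. 0 < em \<and> em \<le> ep \<and> ep < 1 \<and>
       (\<forall>v\<in>Sall Xs. em \<le> rho v \<and> rho v \<le> ep))"

definition H4 :: "(nat \<Rightarrow> 'a set) \<Rightarrow> ('a vertex \<Rightarrow> 'a vertex) \<Rightarrow> ('a vertex \<Rightarrow> real) \<Rightarrow> real \<Rightarrow> bool" where
  "H4 Xs par rho p \<longleftrightarrow> (\<forall>m n v. v \<in> Slev Xs m \<longrightarrow> m < n \<longrightarrow>
       (\<Sum>w\<in>Desc Xs par n v. piw par rho w powr p) \<le> piw par rho v powr p)"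

text \<open>Horizontal edges and the edges of the graph defining D_2 (D_2(u,v) = 1 iff adjacent).\<close>
definition horiz_edge ::
  "'a::metric_space set \<Rightarrow> real \<Rightarrow> real \<Rightarrow> (nat \<Rightarrow> 'a set) \<Rightarrow> 'a vertex \<Rightarrow> 'a vertex \<Rightarrow> bool" where
  "horiz_edge X a lam Xs u v \<longleftrightarrow> u \<noteq> v \<and> snd u = snd v \<and> u \<in> Slev Xs (snd u) \<and> v \<in> Slev Xs (snd v) \<and>
      X \<inter> ball (fst u) (lam / a ^ snd u) \<inter> ball (fst v) (lam / a ^ snd v) \<noteq> {}"

definition D2_adj ::
  "'a::metric_space set \<Rightarrow> real \<Rightarrow> real \<Rightarrow> (nat \<Rightarrow> 'a set) \<Rightarrow> ('a vertex \<Rightarrow> 'a vertex) \<Rightarrow> 'a vertex \<Rightarrow> 'a vertex \<Rightarrow> bool" where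
  "D2_adj X a lam Xs par u v \<longleftrightarrow> u \<in> Sall Xs \<and> v \<in> Sall Xs \<and> u \<noteq> v \<and>
     ((0 < snd u \<and> par u = v) \<or> (0 < snd v \<and> par v = u) \<or> horiz_edge X a lam Xs u v)"

definition ratio :: "('a vertex \<Rightarrow> 'a vertex) \<Rightarrow> ('a vertex \<Rightarrow> real) \<Rightarrow> real \<Rightarrow> ('a vertex \<Rightarrow> real) \<Rightarrow> 'a vertex \<Rightarrow> real" where
  "ratio par rho p f u = f u / piw par rho u powr p"

definition balanced ::
  "'a::metric_space set \<Rightarrow> real \<Rightarrow> real \<Rightarrow> (nat \<Rightarrow> 'a set) \<Rightarrow> ('a vertex \<Rightarrow> 'a vertex) \<Rightarrow> ('a vertex \<Rightarrow> real)
    \<Rightarrow> real \<Rightarrow> real \<Rightarrow> nat \<Rightarrow> ('a vertex \<Rightarrow> real) \<Rightarrow> bool" where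
  "balanced X a lam Xs par rho p C k f \<longleftrightarrow> (\<forall>u\<in>Slev Xs k. f u > 0) \<and>
     (\<forall>u\<in>Slev Xs k. \<forall>v\<in>Slev Xs k. D2_adj X a lam Xs par u v \<longrightarrow>
        ratio par rho p f u \<le> C^2 * ratio par rho p f v)"

definition balanced_on_edge ::
  "('a vertex \<Rightarrow> 'a vertex) \<Rightarrow> ('a vertex \<Rightarrow> real) \<Rightarrow> real \<Rightarrow> real \<Rightarrow> ('a vertex \<Rightarrow> real) \<Rightarrow> 'a vertex \<Rightarrow> 'a vertex \<Rightarrow> bool" where
  "balanced_on_edge par rho p C f u v \<longleftrightarrow>
     C powr (-2) * ratio par rho p f v \<le> ratio par rho p f u \<and> ratio par rho p f u \<le> C^2 * ratio par rho p f v"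

definition compatible ::
  "(nat \<Rightarrow> 'a set) \<Rightarrow> ('a vertex \<Rightarrow> 'a vertex) \<Rightarrow> ('a vertex \<Rightarrow> real) \<Rightarrow> real \<Rightarrow> real \<Rightarrow> nat
    \<Rightarrow> ('a vertex \<Rightarrow> real) \<Rightarrow> ('a vertex \<Rightarrow> real) \<Rightarrow> bool" where
  "compatible Xs par rho p C k f0 f1 \<longleftrightarrow>
     (\<forall>u\<in>Slev Xs k. \<forall>v\<in>Slev Xs (Suc k). par v = u \<longrightarrow>
        ratio par rho p f0 u \<le> ratio par rho p f1 v \<and> ratio par rho p f1 v \<le> C * ratio par rho p f0 u)"

definition pmf_on :: "'a vertex set \<Rightarrow> ('a vertex \<Rightarrow> real) \<Rightarrow> bool" where
  "pmf_on A f \<longleftrightarrow> (\<forall>v\<in>A. f v > 0) \<and> sum f A = 1"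

definition balance_op ::
  "('a vertex \<Rightarrow> 'a vertex) \<Rightarrow> ('a vertex \<Rightarrow> real) \<Rightarrow> real \<Rightarrow> real \<Rightarrow> 'a vertex \<Rightarrow> 'a vertex
    \<Rightarrow> ('a vertex \<Rightarrow> real) \<Rightarrow> ('a vertex \<Rightarrow> real)" where
  "balance_op par rho p C u v f =
     (let pu = piw par rho u powr p; pv = piw par rho v powr p in
      if f u / pu > C^2 * f v / pv then
        (let \<alpha> = (f u / pu - C^2 * f v / pv) / (C^2 / pv + 1 / pu) in f(u := f u - \<alpha>, v := f v + \<alpha>))
      else if f v / pv > C^2 * f u / pu then
        (let \<alpha> = (f v / pv - C^2 * f u / pu) / (C^2 / pu + 1 / pv) in f(v := f v - \<alpha>, u := f u + \<alpha>))
      else f)"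

end

theory Submission
  imports Defs
begin

text \<open>Since \<open>2 \<le> lam \<le> a\<close>, the parents of the two endpoints of a horizontal edge of level
  \<open>k + 1\<close> are equal or adjacent in level \<open>k\<close>, so by balancedness of \<open>mu\<close> their ratios
  \<open>mU, mV\<close> lie within a factor \<open>C\<^sup>2\<close> of each other. Balancing the edge moves mass from the
  endpoint \<open>u\<close> of larger ratio to the other endpoint \<open>v\<close> until exactly
  \<open>ratio u = C\<^sup>2 * ratio v\<close>. The ratio at \<open>u\<close> thus decreases and the one at \<open>v\<close> increases,
  which preserves the upper bound at \<open>u\<close> and the lower bound at \<open>v\<close>; the two remaining bounds
  come from the new identity: \<open>ratio u = C\<^sup>2 * ratio v \<ge> C\<^sup>2 * mV \<ge> mU\<close> and
  \<open>C\<^sup>2 * ratio v = ratio u \<le> C * mU \<le> C\<^sup>3 * mV\<close>.\<close>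

lemma maximal_separated_dist_less:
  assumes "maximal_separated eps Y X" "x \<in> X" "eps > 0"
  shows "\<exists>y\<in>Y. dist x y < eps"
proof (rule ccontr)
  assume far: "\<not> ?thesis"
  then have "x \<notin> Y" using assms(3) by force
  then have "Y \<subset> insert x Y" by blast
  moreover have "insert x Y \<subseteq> X" using assms(1,2) unfolding maximal_separated_def by auto
  moreover have "separated eps (insert x Y)"
    using assms(1) far unfolding maximal_separated_def separated_def
    by (auto simp: dist_commute not_less)
  ultimately show False using assms(1) unfolding maximal_separated_def by blast
qed

lemma hyperbolic_filling_parent_dist:
  assumes hf: "hyperbolic_filling X a Xs x0 par" and "a > 0" and x: "x \<in> Xs (Suc k)"
  obtains y where "y \<in> Xs k" "par (x, Suc k) = (y, k)" "dist x y < 1 / a ^ k"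
proof -
  have net: "maximal_separated (1 / a ^ n) (Xs n) X" for n
    using hf unfolding hyperbolic_filling_def by blast
  have "x \<in> X" using net[of "Suc k"] x unfolding maximal_separated_def by blast
  then obtain z where "z \<in> Xs k" "dist x z < 1 / a ^ k"
    using maximal_separated_dist_less[OF net[of k]] \<open>a > 0\<close> by auto
  moreover obtain y where "y \<in> Xs k" "par (x, Suc k) = (y, k)" "\<forall>z\<in>Xs k. dist x y \<le> dist x z"
    using hf x unfolding hyperbolic_filling_def by blast
  ultimately show thesis using that by force
qed

lemma funpow_par_Slev:
  assumes hf: "hyperbolic_filling X a Xs x0 par" and v: "v \<in> Slev Xs n" and "i \<le> n"
  shows "(par ^^ i) v \<in> Slev Xs (n - i)"
  using \<open>i \<le> n\<close>
proof (induction i)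
  case 0
  then show ?case using v by simp
next
  case (Suc i)
  then obtain m where m: "n - i = Suc m" "n - Suc i = m" by (metis Suc_diff_Suc diff_Suc_1 Suc_le_lessD)
  with Suc obtain x where x: "(par ^^ i) v = (x, Suc m)" "x \<in> Xs (Suc m)"
    unfolding Slev_def by auto
  then obtain y where "y \<in> Xs m" "par (x, Suc m) = (y, m)"
    using hf unfolding hyperbolic_filling_def by blast
  then show ?case using x m by (simp add: Slev_def)
qed

lemma piw_pos:
  assumes hf: "hyperbolic_filling X a Xs x0 par" and rho: "\<forall>v\<in>Sall Xs. rho v > 0"
    and v: "v \<in> Slev Xs n"
  shows "piw par rho v > 0"
  unfolding piw_def
proof (rule prod_pos)
  fix w assume "w \<in> genealogy par v"
  then obtain i where "i \<le> n" "w = (par ^^ i) v"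
    using v unfolding genealogy_def Slev_def by auto
  then have "w \<in> Sall Xs" using funpow_par_Slev[OF hf v] unfolding Sall_def by blast
  then show "rho w > 0" using rho by blast
qed

lemma horiz_edge_parents:
  assumes hf: "hyperbolic_filling X a Xs x0 par" and lam: "2 \<le> lam" "lam \<le> a"
    and edge: "horiz_edge X a lam Xs w w'"
    and w: "w \<in> Slev Xs (Suc k)" and w': "w' \<in> Slev Xs (Suc k)"
  shows "par w \<in> Slev Xs k" "par w' \<in> Slev Xs k"
    and "par w = par w' \<or> D2_adj X a lam Xs par (par w) (par w')"
proof -
  have a: "a > 0" using lam by linarith
  obtain x x' where x: "w = (x, Suc k)" "x \<in> Xs (Suc k)" and x': "w' = (x', Suc k)" "x' \<in> Xs (Suc k)"
    using w w' unfolding Slev_def by blast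
  obtain y where y: "y \<in> Xs k" "par w = (y, k)" "dist x y < 1 / a ^ k"
    using hyperbolic_filling_parent_dist[OF hf a x(2)] x(1) by metis
  obtain y' where y': "y' \<in> Xs k" "par w' = (y', k)" "dist x' y' < 1 / a ^ k"
    using hyperbolic_filling_parent_dist[OF hf a x'(2)] x'(1) by metis
  obtain z where z: "z \<in> X" "dist x z < lam / a ^ Suc k" "dist x' z < lam / a ^ Suc k"
    using edge x x' unfolding horiz_edge_def by (auto simp: dist_commute)
  have "lam / a ^ Suc k = (lam / a) / a ^ k" by simp
  also have "\<dots> \<le> 1 / a ^ k" using lam a by (intro divide_right_mono) auto
  finally have "1 / a ^ k + lam / a ^ Suc k \<le> 2 / a ^ k" by simp
  also have "\<dots> \<le> lam / a ^ k" using lam a by (intro divide_right_mono) auto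
  finally have "dist y z < lam / a ^ k" "dist y' z < lam / a ^ k"
    using dist_triangle[of y z x] dist_triangle[of y' z x'] y(3) y'(3) z(2,3)
    by (simp_all add: dist_commute)
  moreover show parents: "par w \<in> Slev Xs k" "par w' \<in> Slev Xs k"
    using y y' unfolding Slev_def by auto
  ultimately have "par w \<noteq> par w' \<Longrightarrow> horiz_edge X a lam Xs (par w) (par w')"
    unfolding horiz_edge_def using y y' z(1) by (auto simp: dist_commute)
  then show "par w = par w' \<or> D2_adj X a lam Xs par (par w) (par w')"
    using parents unfolding D2_adj_def Sall_def by blast
qed

lemma D2_adj_sym: "D2_adj X a lam Xs par u v \<Longrightarrow> D2_adj X a lam Xs par v u"
  unfolding D2_adj_def horiz_edge_def by (auto simp: Int_commute Int_left_commute)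

lemma balanced_ratio_le:
  assumes bal: "balanced X a lam Xs par rho p C k f" and "u \<in> Slev Xs k" "v \<in> Slev Xs k"
    and "1 \<le> C" and "u = v \<or> D2_adj X a lam Xs par u v"
  shows "ratio par rho p f u \<le> C^2 * ratio par rho p f v"
  using assms(5)
proof
  assume "u = v"
  have "f u > 0" using bal \<open>u \<in> Slev Xs k\<close> unfolding balanced_def by blast
  then have "ratio par rho p f u \<ge> 0" unfolding ratio_def by simp
  moreover have "C^2 \<ge> 1" using \<open>1 \<le> C\<close> by (simp add: one_le_power)
  ultimately show ?thesis using \<open>u = v\<close> by (simp add: mult_le_cancel_right1)
qed (use assms(1-3) in \<open>auto simp: balanced_def\<close>)

lemma balancing_transfer_bounds:
  fixes fu fv Pu Pv C mU mV :: real
  assumes "Pu > 0" "Pv > 0" "C > 1"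
    and heavier: "fu / Pu > C^2 * fv / Pv"
    and al: "al = (fu / Pu - C^2 * fv / Pv) / (C^2 / Pv + 1 / Pu)"
    and "mU \<le> fu / Pu" "fu / Pu \<le> C * mU" "mV \<le> fv / Pv" "fv / Pv \<le> C * mV"
    and "mU \<le> C^2 * mV"
  shows "mU \<le> (fu - al) / Pu \<and> (fu - al) / Pu \<le> C * mU \<and>
         mV \<le> (fv + al) / Pv \<and> (fv + al) / Pv \<le> C * mV"
proof -
  define c where "c = C^2"
  have "c > 1" using \<open>C > 1\<close> unfolding c_def by (simp add: one_less_power)
  have den: "c / Pv + 1 / Pu > 0" using assms(1,2) \<open>c > 1\<close> by (simp add: add_pos_pos)
  have "al > 0" using al heavier den unfolding c_def by simp
  then have decrease: "(fu - al) / Pu < fu / Pu" and increase: "fv / Pv < (fv + al) / Pv"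
    using assms(1,2) by (simp_all add: divide_strict_right_mono)
  have "al * (c / Pv + 1 / Pu) = fu / Pu - c * (fv / Pv)" using al den unfolding c_def by simp
  then have balanced_after: "(fu - al) / Pu = c * ((fv + al) / Pv)"
    by (simp add: algebra_simps diff_divide_distrib add_divide_distrib)
  have "mU \<le> c * mV" using \<open>mU \<le> C^2 * mV\<close> unfolding c_def .
  also have "\<dots> \<le> c * ((fv + al) / Pv)"
    using \<open>mV \<le> fv / Pv\<close> increase \<open>c > 1\<close> by (intro mult_left_mono) auto
  also have "\<dots> = (fu - al) / Pu" using balanced_after by simp
  finally have lower_u: "mU \<le> (fu - al) / Pu" .
  have "c * ((fv + al) / Pv) = (fu - al) / Pu" using balanced_after by simp
  also have "\<dots> \<le> C * mU" using decrease \<open>fu / Pu \<le> C * mU\<close> by simp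
  also have "\<dots> \<le> C * (c * mV)" using \<open>mU \<le> C^2 * mV\<close> \<open>C > 1\<close> unfolding c_def by simp
  finally have "c * ((fv + al) / Pv) \<le> c * (C * mV)" by (simp only: mult.left_commute)
  then have upper_v: "(fv + al) / Pv \<le> C * mV"
    by (rule mult_left_le_imp_le) (use \<open>c > 1\<close> in simp)
  show ?thesis using lower_u upper_v decrease increase assms(6-9) by (intro conjI; linarith)
qed

lemma balance_op_eq_outside:
  "w \<noteq> u \<Longrightarrow> w \<noteq> v \<Longrightarrow> balance_op par rho p C u v f w = f w"
  by (simp add: balance_op_def Let_def)

lemma balance_op_ratio_bounds:
  fixes par :: "'a vertex \<Rightarrow> 'a vertex" and rho f :: "'a vertex \<Rightarrow> real" and p C :: real
    and u v :: "'a vertex"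
  defines "g \<equiv> balance_op par rho p C u v f"
  assumes "u \<noteq> v" and Pu: "piw par rho u powr p > 0" and Pv: "piw par rho v powr p > 0"
    and "C > 1" and "mU \<le> C^2 * mV" "mV \<le> C^2 * mU"
    and "mU \<le> ratio par rho p f u" "ratio par rho p f u \<le> C * mU"
    and "mV \<le> ratio par rho p f v" "ratio par rho p f v \<le> C * mV"
  shows "mU \<le> ratio par rho p g u \<and> ratio par rho p g u \<le> C * mU \<and>
         mV \<le> ratio par rho p g v \<and> ratio par rho p g v \<le> C * mV"
proof -
  define P where "P x = piw par rho x powr p" for x
  consider (u_heavier) "f u / P u > C^2 * f v / P v"
    | (v_heavier) "\<not> f u / P u > C^2 * f v / P v" "f v / P v > C^2 * f u / P u"
    | (neither) "\<not> f u / P u > C^2 * f v / P v" "\<not> f v / P v > C^2 * f u / P u"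
    by blast
  then show ?thesis
  proof cases
    case u_heavier
    define al where "al = (f u / P u - C^2 * f v / P v) / (C^2 / P v + 1 / P u)"
    have "g = f(u := f u - al, v := f v + al)"
      using u_heavier unfolding g_def balance_op_def Let_def al_def P_def by simp
    then show ?thesis
      using balancing_transfer_bounds[OF Pu Pv \<open>C > 1\<close> u_heavier[unfolded P_def] al_def[unfolded P_def]]
        assms(6-) \<open>u \<noteq> v\<close> unfolding ratio_def by auto
  next
    case v_heavier
    define al where "al = (f v / P v - C^2 * f u / P u) / (C^2 / P u + 1 / P v)"
    have "g = f(v := f v - al, u := f u + al)"
      using v_heavier unfolding g_def balance_op_def Let_def al_def P_def by simp
    then show ?thesis
      using balancing_transfer_bounds[OF Pv Pu \<open>C > 1\<close> v_heavier(2)[unfolded P_def] al_def[unfolded P_def]]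
        assms(6-) \<open>u \<noteq> v\<close> unfolding ratio_def by auto
  next
    case neither
    then have "g = f" unfolding g_def balance_op_def Let_def P_def by simp
    then show ?thesis using assms(8-) by simp
  qed
qed

lemma compatible_change_two:
  assumes "compatible Xs par rho p C k mu f" and "\<forall>w. w \<noteq> u \<and> w \<noteq> v \<longrightarrow> g w = f w"
    and "\<forall>w\<in>{u, v}. ratio par rho p mu (par w) \<le> ratio par rho p g w \<and>
                    ratio par rho p g w \<le> C * ratio par rho p mu (par w)"
  shows "compatible Xs par rho p C k mu g"
  unfolding compatible_def
proof (intro ballI impI)
  fix U w assume "U \<in> Slev Xs k" "w \<in> Slev Xs (Suc k)" "par w = U"
  show "ratio par rho p mu U \<le> ratio par rho p g w \<and> ratio par rho p g w \<le> C * ratio par rho p mu U"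
  proof (cases "w \<in> {u, v}")
    case True
    then show ?thesis using assms(3) \<open>par w = U\<close> by blast
  next
    case False
    then have "g w = f w" using assms(2) by blast
    then have "ratio par rho p g w = ratio par rho p f w" by (simp add: ratio_def)
    then show ?thesis using assms(1) \<open>U \<in> Slev Xs k\<close> \<open>w \<in> Slev Xs (Suc k)\<close> \<open>par w = U\<close>
      unfolding compatible_def by simp
  qed
qed

theorem lemma3p12:
  fixes X :: "'a::metric_space set" and a lam :: real and Xs :: "nat \<Rightarrow> 'a set" and x0 :: 'a
    and par :: "'a \<times> nat \<Rightarrow> 'a \<times> nat" and rho :: "'a \<times> nat \<Rightarrow> real" and p C :: real and k :: nat
    and mu f0 :: "'a \<times> nat \<Rightarrow> real" and w1 w1' :: "'a \<times> nat"
  assumes "compact X" and "doubling X" and "diameter X = 1/2"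
    and "6 \<le> lam" and "lam \<le> a"
    and "hyperbolic_filling X a Xs x0 par"
    and "\<forall>v\<in>Sall Xs. rho v > 0"
    and "H1 Xs rho" and "H4 Xs par rho p"
    and "C > 1"
    and "pmf_on (Slev Xs k) mu" and "balanced X a lam Xs par rho p C k mu"
    and "pmf_on (Slev Xs (Suc k)) f0" and "\<forall>v\<in>Slev Xs (Suc k). f0 v \<le> 1"
    and "compatible Xs par rho p C k mu f0"
    and "w1 \<in> Slev Xs (Suc k)" and "w1' \<in> Slev Xs (Suc k)"
    and "horiz_edge X a lam Xs w1 w1'"
    and "\<not> balanced_on_edge par rho p C f0 w1 w1'"
  shows "compatible Xs par rho p C k mu (balance_op par rho p C w1 w1' f0)"
proof -
  note hf = assms(6) and w = assms(16,17) and edge = assms(18)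
  have parents: "par w1 \<in> Slev Xs k" "par w1' \<in> Slev Xs k"
    and adjacent: "par w1 = par w1' \<or> D2_adj X a lam Xs par (par w1) (par w1')"
    using horiz_edge_parents[OF hf _ assms(5) edge w] assms(4) by auto
  have adjacent': "par w1' = par w1 \<or> D2_adj X a lam Xs par (par w1') (par w1)"
    using adjacent D2_adj_sym by metis
  have parent_ratios:
    "ratio par rho p mu (par w1) \<le> C^2 * ratio par rho p mu (par w1')"
    "ratio par rho p mu (par w1') \<le> C^2 * ratio par rho p mu (par w1)"
    using balanced_ratio_le[OF assms(12) parents _ adjacent]
      balanced_ratio_le[OF assms(12) parents(2,1) _ adjacent'] assms(10) by auto
  have "w1 \<noteq> w1'" using edge unfolding horiz_edge_def by blast
  moreover have "piw par rho w1 powr p > 0" "piw par rho w1' powr p > 0"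
    using piw_pos[OF hf assms(7) w(1)] piw_pos[OF hf assms(7) w(2)] by simp_all
  moreover have "ratio par rho p mu (par w) \<le> ratio par rho p f0 w \<and>
                   ratio par rho p f0 w \<le> C * ratio par rho p mu (par w)" if "w \<in> {w1, w1'}" for w
    using assms(15) parents w that unfolding compatible_def by blast
  ultimately have "\<forall>w\<in>{w1, w1'}.
      ratio par rho p mu (par w) \<le> ratio par rho p (balance_op par rho p C w1 w1' f0) w \<and>
      ratio par rho p (balance_op par rho p C w1 w1' f0) w \<le> C * ratio par rho p mu (par w)"
    using balance_op_ratio_bounds[of w1 w1' par rho p C] assms(10) parent_ratios by simp
  then show ?thesis
    using compatible_change_two[OF assms(15)] balance_op_eq_outside by blast
qed

end
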